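(* Let $G=(V,E)$ be a graph on $n$ vertices and $\mathbb{F}$ a field. If there is a proper coloring $c:V\to[m]$ of $G$ with locality $\ell$ and $|\mathbb{F}|\ge m$, then $\mathrm{minrk}_{\mathbb{F}}(\overline{G})\le\ell$. In particular, if $|\mathbb{F}|\ge n$, then $\mathrm{minrk}_{\mathbb{F}}(\overline{G})\le\chi_l(G)$.
   Context: $\overline{G}$ is the complement of $G$. The locality of a proper coloring is the maximum over vertices $v$ of the number of distinct colors on the closed neighborhood $\{v\}\cup N(v)$; $\chi_l(G)$ is the minimum locality of a proper coloring of $G$. For a graph $H$ on $[n]$, a matrix $M\in\mathbb{F}^{n\times n}$ represents $H$ if $M_{i,i}\ne0$ for all $i$ and $M_{i,j}=0$ for distinct non-adjacent $i,j$; $\mathrm{minrk}_{\mathbb{F}}(H)$ is the minimum rank of such a matrix. *)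

theory Defs
  imports Main "Jordan_Normal_Form.DL_Rank"
begin

definition graph_on :: "nat \<Rightarrow> (nat \<Rightarrow> nat \<Rightarrow> bool) \<Rightarrow> bool" where
  "graph_on n E \<longleftrightarrow> (\<forall>i<n. \<forall>j<n. E i j \<longrightarrow> E j i) \<and> (\<forall>i<n. \<not> E i i)"

definition complement :: "(nat \<Rightarrow> nat \<Rightarrow> bool) \<Rightarrow> nat \<Rightarrow> nat \<Rightarrow> bool" where
  "complement E i j \<longleftrightarrow> i \<noteq> j \<and> \<not> E i j"

definition closed_nbhd :: "nat \<Rightarrow> (nat \<Rightarrow> nat \<Rightarrow> bool) \<Rightarrow> nat \<Rightarrow> nat set" where
  "closed_nbhd n E v = {v} \<union> {u. u < n \<and> E v u}"

definition proper_coloring :: "nat \<Rightarrow> (nat \<Rightarrow> nat \<Rightarrow> bool) \<Rightarrow> (nat \<Rightarrow> nat) \<Rightarrow> bool" where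
  "proper_coloring n E c \<longleftrightarrow> (\<forall>i<n. \<forall>j<n. E i j \<longrightarrow> c i \<noteq> c j)"

text \<open>Locality: maximum over vertices of the number of colours in the closed neighbourhood
  (0 for the empty graph).\<close>
definition locality :: "nat \<Rightarrow> (nat \<Rightarrow> nat \<Rightarrow> bool) \<Rightarrow> (nat \<Rightarrow> nat) \<Rightarrow> nat" where
  "locality n E c = Max ({0} \<union> {card (c ` closed_nbhd n E v) | v. v < n})"

definition local_chromatic_number :: "nat \<Rightarrow> (nat \<Rightarrow> nat \<Rightarrow> bool) \<Rightarrow> nat" where
  "local_chromatic_number n E = (LEAST l. \<exists>c. proper_coloring n E c \<and> locality n E c = l)"

definition represents :: "nat \<Rightarrow> (nat \<Rightarrow> nat \<Rightarrow> bool) \<Rightarrow> 'a::field mat \<Rightarrow> bool" where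
  "represents n H M \<longleftrightarrow> M \<in> carrier_mat n n \<and> (\<forall>i<n. M $$ (i,i) \<noteq> 0) \<and>
     (\<forall>i<n. \<forall>j<n. i \<noteq> j \<and> \<not> H i j \<longrightarrow> M $$ (i,j) = 0)"

definition minrk :: "'a::field itself \<Rightarrow> nat \<Rightarrow> (nat \<Rightarrow> nat \<Rightarrow> bool) \<Rightarrow> nat" where
  "minrk _ n H = (LEAST r. \<exists>M :: 'a mat. represents n H M \<and> vec_space.rank n M = r)"

text \<open>|F| \<ge> m (infinite fields satisfy this for every m).\<close>
definition field_size_ge :: "'a::field itself \<Rightarrow> nat \<Rightarrow> bool" where
  "field_size_ge _ m \<longleftrightarrow> infinite (UNIV :: 'a set) \<or> m \<le> card (UNIV :: 'a set)"

end

theory Submission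
  imports Defs "HOL-Computational_Algebra.Polynomial"
begin

(* Injectively label the colours by field elements a. Give vertex i the polynomial
   p_i = prod (X - a k), k ranging over the colours of its open neighbourhood, and put
   M_ij = p_i(a (c j)). Properness makes the diagonal nonzero, while M_ij = 0 whenever j is a
   neighbour of i, i.e. a non-neighbour in the complement. Since deg p_i < l, M is a sum of
   l rank-one matrices (one per monomial), so its rank is at most l. *)

lemma rank_mat_sum_products_le:
  fixes f g :: "nat \<Rightarrow> nat \<Rightarrow> 'a::field"
  shows "vec_space.rank n (mat n n (\<lambda>(i,j). \<Sum>d<k. f d i * g d j)) \<le> k"
proof (induction k)
  case 0
  have "mat n n (\<lambda>(i,j). \<Sum>d<(0::nat). f d i * g d j) = (0\<^sub>m n n :: 'a mat)"
    by (rule eq_matI) auto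
  then show ?case using vec_space.rank_0I[of n n] by (simp only:) simp
next
  case (Suc k)
  let ?A = "mat n n (\<lambda>(i,j). \<Sum>d<k. f d i * g d j)"
  let ?B = "mat n n (\<lambda>(i,j). f k i * g k j)"
  have "mat n n (\<lambda>(i,j). \<Sum>d<Suc k. f d i * g d j) = ?A + ?B"
    by (rule eq_matI) auto
  moreover have "vec_space.rank n (?A + ?B) \<le> vec_space.rank n ?A + vec_space.rank n ?B"
    by (rule vec_space.rank_subadditive) auto
  moreover have "vec_space.rank n ?B \<le> 1"
    by (rule vec_space.rank_le_1_product_entries[of _ n n "f k" "g k"]) auto
  ultimately show ?case using Suc by simp
qed

lemma poly_eq_sum_lessThan:
  fixes p :: "'a::comm_semiring_1 poly"
  assumes "degree p < l"
  shows "poly p x = (\<Sum>d<l. coeff p d * x ^ d)"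
proof -
  have "poly p x = (\<Sum>d\<le>degree p. coeff p d * x ^ d)" by (rule poly_altdef)
  also have "\<dots> = (\<Sum>d<l. coeff p d * x ^ d)"
    by (rule sum.mono_neutral_left) (use assms in \<open>auto simp: coeff_eq_0\<close>)
  finally show ?thesis .
qed

lemma rank_poly_eval_mat_le:
  fixes p :: "nat \<Rightarrow> 'a::field poly" and x :: "nat \<Rightarrow> 'a"
  assumes "\<And>i. i < n \<Longrightarrow> degree (p i) < l"
  shows "vec_space.rank n (mat n n (\<lambda>(i,j). poly (p i) (x j))) \<le> l"
proof -
  have "mat n n (\<lambda>(i,j). poly (p i) (x j)) = mat n n (\<lambda>(i,j). \<Sum>d<l. coeff (p i) d * x j ^ d)"
    by (rule eq_matI) (simp_all add: poly_eq_sum_lessThan assms)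
  then show ?thesis
    using rank_mat_sum_products_le[where f = "\<lambda>d i. coeff (p i) d" and g = "\<lambda>d j. x j ^ d"]
    by simp
qed

lemma minrk_le_rank:
  fixes M :: "'a::field mat"
  assumes "represents n H M"
  shows "minrk TYPE('a) n H \<le> vec_space.rank n M"
  unfolding minrk_def by (rule Least_le) (use assms in blast)

lemma card_neighbour_colours_less_locality:
  assumes "proper_coloring n E c" and "i < n"
  shows "card (c ` {u. u < n \<and> E i u}) < locality n E c"
proof -
  let ?S = "c ` {u. u < n \<and> E i u}"
  have "c i \<notin> ?S" using assms unfolding proper_coloring_def by auto
  moreover have "c ` closed_nbhd n E i = insert (c i) ?S"
    unfolding closed_nbhd_def by auto
  ultimately have "card (c ` closed_nbhd n E i) = Suc (card ?S)" by simp
  moreover have "card (c ` closed_nbhd n E i) \<le> locality n E c"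
    unfolding locality_def by (rule Max_ge) (use assms(2) in auto)
  ultimately show ?thesis by simp
qed

lemma minrk_complement_le_locality:
  fixes \<alpha> :: "nat \<Rightarrow> 'a::field"
  assumes proper: "proper_coloring n E c" and inj: "inj_on \<alpha> (c ` {..<n})"
  shows "minrk TYPE('a) n (complement E) \<le> locality n E c"
proof -
  define S where "S i = c ` {u. u < n \<and> E i u}" for i
  define p where "p i = (\<Prod>k\<in>S i. [:- \<alpha> k, 1:])" for i
  define M where "M = mat n n (\<lambda>(i,j). poly (p i) (\<alpha> (c j)))"
  have finite_S: "finite (S i)" for i unfolding S_def by auto
  have poly_p: "poly (p i) x = (\<Prod>k\<in>S i. x - \<alpha> k)" for i x
    unfolding p_def by (simp add: poly_prod)
  have "degree (p i) < locality n E c" if "i < n" for i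
  proof -
    have "degree (p i) \<le> sum (degree \<circ> (\<lambda>k. [:- \<alpha> k, 1:])) (S i)"
      unfolding p_def by (rule degree_prod_sum_le[OF finite_S])
    then show ?thesis
      using card_neighbour_colours_less_locality[OF proper that] by (simp add: S_def)
  qed
  then have "vec_space.rank n M \<le> locality n E c"
    unfolding M_def by (rule rank_poly_eval_mat_le)
  moreover have "represents n (complement E) M"
    unfolding represents_def
  proof (intro conjI allI impI)
    show "M \<in> carrier_mat n n" unfolding M_def by simp
  next
    fix i assume i: "i < n"
    have "\<alpha> (c i) \<noteq> \<alpha> k" if "k \<in> S i" for k
    proof
      assume "\<alpha> (c i) = \<alpha> k"
      moreover have "k \<in> c ` {..<n}" "c i \<in> c ` {..<n}" using that i unfolding S_def by auto
      ultimately have "c i = k" using inj by (auto dest: inj_onD)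
      then show False
        using that i proper unfolding S_def proper_coloring_def by auto
    qed
    then show "M $$ (i, i) \<noteq> 0" unfolding M_def using i finite_S by (simp add: poly_p)
  next
    fix i j assume "i < n" "j < n" "i \<noteq> j \<and> \<not> complement E i j"
    then have "c j \<in> S i" unfolding S_def complement_def by auto
    then show "M $$ (i, j) = 0" unfolding M_def using \<open>i < n\<close> \<open>j < n\<close> finite_S
      by (auto simp: poly_p)
  qed
  then have "minrk TYPE('a) n (complement E) \<le> vec_space.rank n M"
    by (rule minrk_le_rank)
  ultimately show ?thesis by simp
qed

lemma field_size_ge_obtains_inj_on:
  fixes A :: "'b set"
  assumes "finite A" and "field_size_ge TYPE('a::field) k" and "card A \<le> k"
  obtains \<alpha> :: "'b \<Rightarrow> 'a::field" where "inj_on \<alpha> A"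
proof -
  obtain B :: "'a set" where "finite B" "card A \<le> card B"
  proof (cases "finite (UNIV :: 'a set)")
    case True
    then show ?thesis
      using assms that[of UNIV] unfolding field_size_ge_def by auto
  next
    case False
    then show ?thesis using infinite_arbitrarily_large that by (metis order_refl)
  qed
  then show ?thesis using card_le_inj[OF assms(1)] that by blast
qed

lemma local_chromatic_number_attained:
  assumes "graph_on n E"
  obtains c where "proper_coloring n E c" "locality n E c = local_chromatic_number n E"
proof -
  have "proper_coloring n E id"
    using assms unfolding graph_on_def proper_coloring_def by auto
  then have "\<exists>l c. proper_coloring n E c \<and> locality n E c = l" by blast
  from LeastI_ex[OF this] show ?thesis
    using that unfolding local_chromatic_number_def by blast
qed

theorem mainTheorem11:
  fixes n m l :: nat and E :: "nat \<Rightarrow> nat \<Rightarrow> bool"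
  assumes "graph_on n E"
  shows "(\<forall>c. proper_coloring n E c \<and> (\<forall>v<n. c v < m) \<and> locality n E c = l
             \<and> field_size_ge TYPE('a::field) m
           \<longrightarrow> minrk TYPE('a) n (complement E) \<le> l)
    \<and> (field_size_ge TYPE('a) n
           \<longrightarrow> minrk TYPE('a) n (complement E) \<le> local_chromatic_number n E)"
proof (intro conjI allI impI)
  fix c assume c: "proper_coloring n E c \<and> (\<forall>v<n. c v < m) \<and> locality n E c = l
             \<and> field_size_ge TYPE('a) m"
  then have "card (c ` {..<n}) \<le> m"
    using card_mono[of "{..<m}" "c ` {..<n}"] by fastforce
  with c obtain \<alpha> :: "nat \<Rightarrow> 'a" where "inj_on \<alpha> (c ` {..<n})"
    using field_size_ge_obtains_inj_on[of "c ` {..<n}" m] by blast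
  then show "minrk TYPE('a) n (complement E) \<le> l"
    using minrk_complement_le_locality c by blast
next
  assume size: "field_size_ge TYPE('a) n"
  obtain c where c: "proper_coloring n E c" "locality n E c = local_chromatic_number n E"
    using local_chromatic_number_attained[OF assms] .
  have "card (c ` {..<n}) \<le> n" using card_image_le[of "{..<n}" c] by simp
  with size obtain \<alpha> :: "nat \<Rightarrow> 'a" where "inj_on \<alpha> (c ` {..<n})"
    using field_size_ge_obtains_inj_on[of "c ` {..<n}" n] by blast
  then show "minrk TYPE('a) n (complement E) \<le> local_chromatic_number n E"
    using minrk_complement_le_locality c by metis
qed

end
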